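(* Let $\sigma:\mathbb R\to\mathbb C$ be smooth except at finitely many points where it has bounded jumps, with $\sigma(t)\to0$ as $t\to-\infty$ and $\sigma(t)\to1$ as $t\to+\infty$ exponentially fast, and let $K$ have kernel $K(x,y)=\int_{-\infty}^\infty\sigma(t)\mathrm{Ai}(x+t)\mathrm{Ai}(y+t)\,dt$. Then for every $s\in\mathbb R$, $$\det(I-K)_{L^2(s,\infty)}=\det(I-\hat K_s)_{L^2(-\infty,\infty)},\qquad\hat K_s(x,y)=\sqrt{\sigma(x-s)}\,K_{\mathrm{Ai}}(x,y)\,\sqrt{\sigma(y-s)},$$ where $\sqrt{\sigma}$ denotes a fixed square root of $\sigma$.
   Context: $\mathrm{Ai}$ is the Airy function and $K_{\mathrm{Ai}}(x,y)=\int_0^\infty\mathrm{Ai}(x+t)\mathrm{Ai}(y+t)\,dt$ is the Airy kernel. *)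

theory Defs
  imports "HOL-Analysis.Analysis"
begin

text \<open>Airy function: Ai(x) = (1/pi) * lim_{R->oo} int_0^R cos(t^3/3 + x t) dt
  (the defining integral is only conditionally convergent, hence the limit).\<close>
definition Ai :: "real \<Rightarrow> real" where
  "Ai x = (1 / pi) * lim (\<lambda>R::nat. integral {0..real R} (\<lambda>t. cos (t ^ 3 / 3 + x * t)))"

definition airy_kernel :: "real \<Rightarrow> real \<Rightarrow> real" where
  "airy_kernel x y = (LINT t | restrict_space lborel {0..}. Ai (x + t) * Ai (y + t))"

definition kernel_det :: "nat \<Rightarrow> (real \<Rightarrow> real \<Rightarrow> complex) \<Rightarrow> (nat \<Rightarrow> real) \<Rightarrow> complex" where
  "kernel_det n k x = (\<Sum>p | p permutes {..<n}. of_int (sign p) * (\<Prod>i<n. k (x i) (x (p i))))"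

text \<open>Fredholm determinant det(I - K) on L^2(A) of the integral operator with kernel k,
  given by the Fredholm series
  sum_n (-1)^n/n! int_{A^n} det[k(x_i,x_j)] dx_1 ... dx_n.\<close>
definition fredholm_det :: "real set \<Rightarrow> (real \<Rightarrow> real \<Rightarrow> complex) \<Rightarrow> complex" where
  "fredholm_det A k = (\<Sum>n. ((-1) ^ n / of_nat (fact n)) *
      integral\<^sup>L (PiM {..<n} (\<lambda>_. restrict_space lborel A)) (kernel_det n k))"

definition smooth_off :: "real set \<Rightarrow> (real \<Rightarrow> complex) \<Rightarrow> bool" where
  "smooth_off S f \<longleftrightarrow> (\<exists>D :: nat \<Rightarrow> real \<Rightarrow> complex. D 0 = f \<and>
      (\<forall>k. \<forall>x. x \<notin> S \<longrightarrow> (D k has_vector_derivative D (Suc k) x) (at x)))"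

definition admissible_sigma :: "(real \<Rightarrow> complex) \<Rightarrow> bool" where
  "admissible_sigma \<sigma> \<longleftrightarrow>
     (\<exists>S. finite S \<and> smooth_off S \<sigma> \<and>
        (\<forall>p\<in>S. (\<exists>L. (\<sigma> \<longlongrightarrow> L) (at_left p)) \<and> (\<exists>R. (\<sigma> \<longlongrightarrow> R) (at_right p)))) \<and>
     (\<exists>C c. c > 0 \<and> (\<forall>t\<le>0. norm (\<sigma> t) \<le> C * exp (c * t)) \<and>
                     (\<forall>t\<ge>0. norm (\<sigma> t - 1) \<le> C * exp (- c * t)))"

end

theory Submission
  imports Defs "HOL-Probability.Sinc_Integral"
begin

text \<open>Factor \<open>\<sigma> = g h\<close> with \<open>g = sqrt \<bar>\<sigma>\<bar>\<close> and shift the integration variable by \<open>s\<close>: the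
  kernel of \<open>K\<close> on \<open>(s, \<infinity>)\<close> becomes \<open>\<integral> a(x,t) b(y,t) dt\<close> with \<open>a(x,t) = h(t - s) Ai(x + t - s)\<close> and
  \<open>b(x,t) = g(t - s) Ai(x + t - s)\<close>, so \<open>K = AB\<close>. Both factors are Hilbert--Schmidt: for \<open>x \<ge> 0\<close> one has
  \<open>\<bar>Ai(x + t)\<bar> \<le> 32 w(t) / (1 + x)\<close>, because two integrations by parts of the oscillatory Airy
  integral give \<open>Ai(x) = O(x\<^sup>-\<^sup>2)\<close> and \<open>\<bar>Ai(x)\<bar> \<le> \<bar>x\<bar> + 3\<close> everywhere, and the polynomial growth of
  \<open>w\<close> at \<open>-\<infinity>\<close> is killed by the exponential decay of \<open>\<sigma>\<close>. By Fubini each term of the Fredholm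
  series of \<open>AB\<close> equals the corresponding term for \<open>BA\<close>, whose kernel is \<open>g(x - s) K\<^sub>A\<^sub>i(x,y) h(y - s)\<close>.
  Finally the Fredholm series of \<open>u(x) k(x,y) v(y)\<close> depends on \<open>u, v\<close> only through \<open>u v\<close>, and
  \<open>g h = \<sigma> = r\<^sup>2\<close>.\<close>

section \<open>Fredholm determinants of products of Hilbert--Schmidt kernels\<close>

lemma kernel_det_eq_sum_permutations:
  "kernel_det n k = (\<lambda>x. \<Sum>p\<in>{p. p permutes {..<n}}. of_int (sign p) * (\<Prod>i<n. k (x i) (x (p i))))"
  by (rule ext) (simp add: kernel_det_def)

lemma kernel_det_conjugate:
  "kernel_det n (\<lambda>x y. u x * k x y * v y) z = (\<Prod>i<n. u (z i) * v (z i)) * kernel_det n k z"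
  unfolding kernel_det_def sum_distrib_left
proof (rule sum.cong[OF refl])
  fix p assume "p \<in> {p. p permutes {..<n}}"
  hence "(\<Prod>i<n. v (z (p i))) = (\<Prod>i<n. v (z i))"
    using prod.permute[of p "{..<n}" "\<lambda>i. v (z i)"] by (simp add: comp_def)
  thus "of_int (sign p) * (\<Prod>i<n. u (z i) * k (z i) (z (p i)) * v (z (p i))) =
    (\<Prod>i<n. u (z i) * v (z i)) * (of_int (sign p) * (\<Prod>i<n. k (z i) (z (p i))))"
    by (simp add: prod.distrib mult_ac)
qed

lemma fredholm_det_conjugate_cong:
  assumes "\<And>y. u y * v y = u' y * v' y"
  shows "fredholm_det A (\<lambda>x y. u x * k x y * v y) = fredholm_det A (\<lambda>x y. u' x * k x y * v' y)"
  unfolding fredholm_det_def kernel_det_conjugate assms ..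

lemma integrable_pair_measure_mult:
  fixes f :: "'a \<Rightarrow> real" and g :: "'b \<Rightarrow> real"
  assumes "sigma_finite_measure M1" "sigma_finite_measure M2"
    and f: "integrable M1 f" and g: "integrable M2 g"
  shows "integrable (M1 \<Otimes>\<^sub>M M2) (\<lambda>z. f (fst z) * g (snd z))"
proof -
  interpret pair_sigma_finite M1 M2 using assms(1,2) by (simp add: pair_sigma_finite.intro)
  have [measurable]: "f \<in> borel_measurable M1" "g \<in> borel_measurable M2" using f g by auto
  have "(\<integral>\<^sup>+ z. ennreal (norm (f (fst z) * g (snd z))) \<partial>(M1 \<Otimes>\<^sub>M M2))
      = (\<integral>\<^sup>+ x. \<integral>\<^sup>+ y. ennreal (norm (f x)) * ennreal (norm (g y)) \<partial>M2 \<partial>M1)"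
    using M2.nn_integral_fst[where f="\<lambda>z. ennreal (norm (f (fst z))) * ennreal (norm (g (snd z)))"]
    by (simp add: abs_mult ennreal_mult)
  also have "\<dots> = (\<integral>\<^sup>+ x. ennreal (norm (f x)) \<partial>M1) * (\<integral>\<^sup>+ y. ennreal (norm (g y)) \<partial>M2)"
    by (simp add: nn_integral_cmult nn_integral_multc)
  also have "\<dots> < \<infinity>" using f g
    by (simp add: integrable_iff_bounded ennreal_mult_less_top)
  finally show ?thesis by (simp add: integrable_iff_bounded)
qed

locale square_integrable_factorization =
  fixes MX MT :: "real measure" and a b :: "real \<Rightarrow> real \<Rightarrow> complex" and p q :: "real \<Rightarrow> real"
  assumes sigma_finite_X: "sigma_finite_measure MX" and sigma_finite_T: "sigma_finite_measure MT"
    and measurable_a[measurable]: "(\<lambda>z. a (fst z) (snd z)) \<in> borel_measurable (MX \<Otimes>\<^sub>M MT)"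
    and measurable_b[measurable]: "(\<lambda>z. b (fst z) (snd z)) \<in> borel_measurable (MX \<Otimes>\<^sub>M MT)"
    and norm_a_le: "\<And>x t. x \<in> space MX \<Longrightarrow> t \<in> space MT \<Longrightarrow> norm (a x t) \<le> p x * q t"
    and norm_b_le: "\<And>x t. x \<in> space MX \<Longrightarrow> t \<in> space MT \<Longrightarrow> norm (b x t) \<le> p x * q t"
    and integrable_p_square: "integrable MX (\<lambda>x. (p x)\<^sup>2)"
    and integrable_q_square: "integrable MT (\<lambda>t. (q t)\<^sup>2)"
begin

definition kernel_AB :: "real \<Rightarrow> real \<Rightarrow> complex" where
  "kernel_AB x y = (\<integral>t. a x t * b y t \<partial>MT)"

definition kernel_BA :: "real \<Rightarrow> real \<Rightarrow> complex" where
  "kernel_BA t t' = (\<integral>x. b x t * a x t' \<partial>MX)"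

abbreviation PX :: "nat \<Rightarrow> (nat \<Rightarrow> real) measure" where "PX n \<equiv> PiM {..<n} (\<lambda>_. MX)"
abbreviation PT :: "nat \<Rightarrow> (nat \<Rightarrow> real) measure" where "PT n \<equiv> PiM {..<n} (\<lambda>_. MT)"

lemma pq_nonneg: "x \<in> space MX \<Longrightarrow> t \<in> space MT \<Longrightarrow> 0 \<le> p x * q t"
  using norm_a_le norm_ge_zero order_trans by blast

lemma measurable_sections:
  shows "x \<in> space MX \<Longrightarrow> (\<lambda>t. a x t) \<in> borel_measurable MT"
    and "x \<in> space MX \<Longrightarrow> (\<lambda>t. b x t) \<in> borel_measurable MT"
    and "t \<in> space MT \<Longrightarrow> (\<lambda>x. a x t) \<in> borel_measurable MX"
    and "t \<in> space MT \<Longrightarrow> (\<lambda>x. b x t) \<in> borel_measurable MX"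
  using measurable_compose[OF measurable_Pair1' measurable_a] measurable_compose[OF measurable_Pair1' measurable_b]
    measurable_compose[OF measurable_Pair2' measurable_a] measurable_compose[OF measurable_Pair2' measurable_b]
  by simp_all

lemma integrable_AB_integrand:
  assumes "x \<in> space MX" "y \<in> space MX"
  shows "integrable MT (\<lambda>t. a x t * b y t)"
proof (rule Bochner_Integration.integrable_bound)
  show "integrable MT (\<lambda>t. p x * p y * (q t)\<^sup>2)"
    using integrable_q_square by simp
  show "(\<lambda>t. a x t * b y t) \<in> borel_measurable MT"
    using assms measurable_sections by simp
  show "AE t in MT. norm (a x t * b y t) \<le> norm (p x * p y * (q t)\<^sup>2)"
  proof (rule AE_I2)
    fix t assume t: "t \<in> space MT"
    have "norm (a x t * b y t) \<le> (p x * q t) * (p y * q t)"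
      unfolding norm_mult using norm_a_le[OF assms(1) t] norm_b_le[OF assms(2) t] pq_nonneg[OF assms(1) t]
      by (intro mult_mono) auto
    thus "norm (a x t * b y t) \<le> norm (p x * p y * (q t)\<^sup>2)"
      by (simp add: power2_eq_square mult_ac)
  qed
qed

lemma integrable_BA_integrand:
  assumes "t \<in> space MT" "t' \<in> space MT"
  shows "integrable MX (\<lambda>x. b x t * a x t')"
proof (rule Bochner_Integration.integrable_bound)
  show "integrable MX (\<lambda>x. q t * q t' * (p x)\<^sup>2)"
    using integrable_p_square by simp
  show "(\<lambda>x. b x t * a x t') \<in> borel_measurable MX"
    using assms measurable_sections by simp
  show "AE x in MX. norm (b x t * a x t') \<le> norm (q t * q t' * (p x)\<^sup>2)"
  proof (rule AE_I2)
    fix x assume x: "x \<in> space MX"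
    have "norm (b x t * a x t') \<le> (p x * q t) * (p x * q t')"
      unfolding norm_mult using norm_b_le[OF x assms(1)] norm_a_le[OF x assms(2)] pq_nonneg[OF x assms(1)]
      by (intro mult_mono) auto
    thus "norm (b x t * a x t') \<le> norm (q t * q t' * (p x)\<^sup>2)"
      by (simp add: power2_eq_square mult_ac)
  qed
qed

lemma product_sigma_finite_X: "product_sigma_finite (\<lambda>_::nat. MX)"
  and product_sigma_finite_T: "product_sigma_finite (\<lambda>_::nat. MT)"
  by (simp_all add: product_sigma_finite_def sigma_finite_X sigma_finite_T)

lemma sigma_finite_PX: "sigma_finite_measure (PX n)"
  by (rule product_sigma_finite.sigma_finite[OF product_sigma_finite_X]) simp

lemma sigma_finite_PT: "sigma_finite_measure (PT n)"
  by (rule product_sigma_finite.sigma_finite[OF product_sigma_finite_T]) simp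

definition permutation_integrand :: "nat \<Rightarrow> (nat \<Rightarrow> nat) \<Rightarrow> (nat \<Rightarrow> real) \<Rightarrow> (nat \<Rightarrow> real) \<Rightarrow> complex" where
  "permutation_integrand n \<pi> x t = (\<Prod>i<n. a (x i) (t i) * b (x (\<pi> i)) (t i))"

lemma integrable_permutation_integrand:
  assumes \<pi>: "\<pi> permutes {..<n}"
  shows "integrable (PX n \<Otimes>\<^sub>M PT n) (\<lambda>z. permutation_integrand n \<pi> (fst z) (snd z))"
proof (rule Bochner_Integration.integrable_bound)
  have \<pi>n: "i < n \<Longrightarrow> \<pi> i < n" for i using permutes_in_image[OF \<pi>] by simp
  have measurable_coordinates: "(\<lambda>z. (fst z i, snd z j)) \<in> measurable (PX n \<Otimes>\<^sub>M PT n) (MX \<Otimes>\<^sub>M MT)"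
    if "i < n" "j < n" for i j
    by (rule measurable_Pair; rule measurable_compose[OF _ measurable_component_singleton])
       (use that in auto)
  have in_space: "fst z i \<in> space MX" "snd z i \<in> space MT" if "z \<in> space (PX n \<Otimes>\<^sub>M PT n)" "i < n" for z i
    using that by (auto simp: space_pair_measure space_PiM PiE_def Pi_def)
  show "integrable (PX n \<Otimes>\<^sub>M PT n) (\<lambda>z. (\<Prod>i<n. (p (fst z i))\<^sup>2) * (\<Prod>i<n. (q (snd z i))\<^sup>2))"
    by (rule integrable_pair_measure_mult[OF sigma_finite_PX sigma_finite_PT])
       (auto intro!: product_sigma_finite.product_integrable_prod[OF product_sigma_finite_X] product_sigma_finite.product_integrable_prod[OF product_sigma_finite_T] integrable_p_square integrable_q_square)
  show "(\<lambda>z. permutation_integrand n \<pi> (fst z) (snd z)) \<in> borel_measurable (PX n \<Otimes>\<^sub>M PT n)"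
    unfolding permutation_integrand_def
    by (intro borel_measurable_prod borel_measurable_times
          measurable_compose[OF measurable_coordinates measurable_a, simplified]
          measurable_compose[OF measurable_coordinates measurable_b, simplified])
       (auto simp: \<pi>n)
  show "AE z in PX n \<Otimes>\<^sub>M PT n. norm (permutation_integrand n \<pi> (fst z) (snd z))
      \<le> norm ((\<Prod>i<n. (p (fst z i))\<^sup>2) * (\<Prod>i<n. (q (snd z i))\<^sup>2))"
  proof (rule AE_I2)
    fix z assume z: "z \<in> space (PX n \<Otimes>\<^sub>M PT n)"
    have "norm (permutation_integrand n \<pi> (fst z) (snd z))
        = (\<Prod>i<n. norm (a (fst z i) (snd z i)) * norm (b (fst z (\<pi> i)) (snd z i)))"
      by (simp add: permutation_integrand_def prod_norm[symmetric] norm_mult)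
    also have "\<dots> \<le> (\<Prod>i<n. (p (fst z i) * q (snd z i)) * (p (fst z (\<pi> i)) * q (snd z i)))"
      by (rule prod_mono) (auto intro!: mult_mono norm_a_le norm_b_le in_space[OF z] pq_nonneg \<pi>n)
    also have "\<dots> = (\<Prod>i<n. p (fst z i)) * (\<Prod>i<n. p (fst z (\<pi> i))) * (\<Prod>i<n. (q (snd z i))\<^sup>2)"
      by (simp add: prod.distrib power2_eq_square mult_ac)
    also have "(\<Prod>i<n. p (fst z (\<pi> i))) = (\<Prod>i<n. p (fst z i))"
      using prod.permute[OF \<pi>, of "\<lambda>i. p (fst z i)"] by (simp add: comp_def)
    finally show "norm (permutation_integrand n \<pi> (fst z) (snd z))
        \<le> norm ((\<Prod>i<n. (p (fst z i))\<^sup>2) * (\<Prod>i<n. (q (snd z i))\<^sup>2))"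
      by (simp add: power2_eq_square prod.distrib)
  qed
qed

lemma integral_permutation_integrand_PT:
  assumes \<pi>: "\<pi> permutes {..<n}" and x: "x \<in> space (PX n)"
  shows "(\<integral>t. permutation_integrand n \<pi> x t \<partial>PT n) = (\<Prod>i<n. kernel_AB (x i) (x (\<pi> i)))"
  unfolding permutation_integrand_def kernel_AB_def
  using x permutes_in_image[OF \<pi>]
  by (intro product_sigma_finite.product_integral_prod[OF product_sigma_finite_T] integrable_AB_integrand) (auto simp: space_PiM)

lemma integral_permutation_integrand_PX:
  assumes \<pi>: "\<pi> permutes {..<n}" and t: "t \<in> space (PT n)"
  shows "(\<integral>x. permutation_integrand n \<pi> x t \<partial>PX n) = (\<Prod>i<n. kernel_BA (t i) (t (\<pi> i)))"
proof -
  have "permutation_integrand n \<pi> x t = (\<Prod>j<n. b (x j) (t (inv \<pi> j)) * a (x j) (t j))" for x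
  proof -
    have "(\<Prod>i<n. b (x (\<pi> i)) (t i)) = (\<Prod>j<n. b (x j) (t (inv \<pi> j)))"
      using prod.permute[OF permutes_inv[OF \<pi>], of "\<lambda>i. b (x (\<pi> i)) (t i)"]
      by (simp add: comp_def permutes_inverses[OF \<pi>])
    thus ?thesis unfolding permutation_integrand_def by (simp add: prod.distrib mult_ac)
  qed
  hence "(\<integral>x. permutation_integrand n \<pi> x t \<partial>PX n) = (\<integral>x. (\<Prod>j<n. b (x j) (t (inv \<pi> j)) * a (x j) (t j)) \<partial>PX n)"
    by simp
  also have "\<dots> = (\<Prod>j<n. kernel_BA (t (inv \<pi> j)) (t j))"
    unfolding kernel_BA_def using t permutes_in_image[OF permutes_inv[OF \<pi>]]
    by (intro product_sigma_finite.product_integral_prod[OF product_sigma_finite_X] integrable_BA_integrand) (auto simp: space_PiM)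
  also have "\<dots> = (\<Prod>i<n. kernel_BA (t i) (t (\<pi> i)))"
    using prod.permute[OF \<pi>, of "\<lambda>j. kernel_BA (t (inv \<pi> j)) (t j)"]
    by (simp add: comp_def permutes_inverses[OF \<pi>])
  finally show ?thesis .
qed

lemma permutation_term_swap:
  assumes \<pi>: "\<pi> permutes {..<n}"
  shows "integrable (PX n) (\<lambda>x. \<Prod>i<n. kernel_AB (x i) (x (\<pi> i)))"
    and "integrable (PT n) (\<lambda>t. \<Prod>i<n. kernel_BA (t i) (t (\<pi> i)))"
    and "(\<integral>x. (\<Prod>i<n. kernel_AB (x i) (x (\<pi> i))) \<partial>PX n) = (\<integral>t. (\<Prod>i<n. kernel_BA (t i) (t (\<pi> i))) \<partial>PT n)"
proof -
  interpret pair_sigma_finite "PX n" "PT n"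
    by (simp add: pair_sigma_finite.intro sigma_finite_PX sigma_finite_PT)
  interpret Q: pair_sigma_finite "PT n" "PX n"
    by (simp add: pair_sigma_finite.intro sigma_finite_PX sigma_finite_PT)
  note H = integrable_permutation_integrand[OF \<pi>]
  show "integrable (PX n) (\<lambda>x. \<Prod>i<n. kernel_AB (x i) (x (\<pi> i)))"
    using integrable_fst'[OF H] integral_permutation_integrand_PT[OF \<pi>]
    by (simp cong: Bochner_Integration.integrable_cong)
  have "integrable (PT n \<Otimes>\<^sub>M PX n) (\<lambda>(t, x). permutation_integrand n \<pi> x t)"
    using H integrable_product_swap_iff[of "\<lambda>z. permutation_integrand n \<pi> (fst z) (snd z)"]
    by simp
  then show "integrable (PT n) (\<lambda>t. \<Prod>i<n. kernel_BA (t i) (t (\<pi> i)))"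
    using Q.integrable_fst' integral_permutation_integrand_PX[OF \<pi>]
    by (fastforce cong: Bochner_Integration.integrable_cong)
  have "(\<integral>x. (\<Prod>i<n. kernel_AB (x i) (x (\<pi> i))) \<partial>PX n) = (\<integral>x. \<integral>t. permutation_integrand n \<pi> x t \<partial>PT n \<partial>PX n)"
    by (intro Bochner_Integration.integral_cong) (simp_all add: integral_permutation_integrand_PT[OF \<pi>])
  also have "\<dots> = (\<integral>t. \<integral>x. permutation_integrand n \<pi> x t \<partial>PX n \<partial>PT n)"
    by (rule Fubini_integral[symmetric]) (use H in \<open>simp add: split_beta'\<close>)
  also have "\<dots> = (\<integral>t. (\<Prod>i<n. kernel_BA (t i) (t (\<pi> i))) \<partial>PT n)"
    by (intro Bochner_Integration.integral_cong) (simp_all add: integral_permutation_integrand_PX[OF \<pi>])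
  finally show "(\<integral>x. (\<Prod>i<n. kernel_AB (x i) (x (\<pi> i))) \<partial>PX n) = (\<integral>t. (\<Prod>i<n. kernel_BA (t i) (t (\<pi> i))) \<partial>PT n)" .
qed

lemma integral_kernel_det_swap:
  "integral\<^sup>L (PX n) (kernel_det n kernel_AB) = integral\<^sup>L (PT n) (kernel_det n kernel_BA)"
  unfolding kernel_det_eq_sum_permutations
  by (simp add: Bochner_Integration.integral_sum permutation_term_swap)

end

text \<open>The Fredholm-series form of \<open>det(I - AB) = det(I - BA)\<close> for Hilbert--Schmidt
  operators \<open>A, B\<close> with kernels \<open>a\<close> and \<open>b\<close>.\<close>

lemma fredholm_det_swap:
  assumes "square_integrable_factorization (restrict_space lborel A) (restrict_space lborel B) a b p q"
  shows "fredholm_det A (\<lambda>x y. \<integral>t. a x t * b y t \<partial>restrict_space lborel B)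
       = fredholm_det B (\<lambda>t t'. \<integral>x. b x t * a x t' \<partial>restrict_space lborel A)"
  using square_integrable_factorization.integral_kernel_det_swap[OF assms]
  unfolding fredholm_det_def square_integrable_factorization.kernel_AB_def[OF assms, abs_def]
    square_integrable_factorization.kernel_BA_def[OF assms, abs_def]
  by simp

section \<open>Bounds for the Airy function\<close>

definition airy_partial :: "real \<Rightarrow> real \<Rightarrow> real" where
  "airy_partial x R = integral {0..R} (\<lambda>t. cos (t^3/3 + x*t))"

lemma airy_integrand_integrable: "(\<lambda>t::real. cos (t^3/3 + x*t)) integrable_on {a..b}"
  by (intro integrable_continuous_interval continuous_intros) auto

lemma airy_partial_add:
  assumes "0 \<le> A" "A \<le> B"
  shows "airy_partial x B = airy_partial x A + integral {A..B} (\<lambda>t. cos (t^3/3 + x*t))"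
  unfolding airy_partial_def
  using Henstock_Kurzweil_Integration.integral_combine[OF assms airy_integrand_integrable] by simp

lemma abs_airy_partial_le:
  assumes "0 \<le> T"
  shows "\<bar>airy_partial x T\<bar> \<le> T"
proof -
  have "norm (airy_partial x T) \<le> 1 * (T - 0)"
    unfolding airy_partial_def
    by (rule integral_bound) (use assms in \<open>auto intro!: continuous_intros\<close>)
  thus ?thesis by simp
qed

lemma continuous_airy_partial: "continuous_on UNIV (\<lambda>x. airy_partial x R)"
proof -
  have "continuous_on (UNIV \<times> cbox 0 R) (\<lambda>(x, t). cos (t^3/3 + x*t))"
    unfolding case_prod_beta by (intro continuous_intros) auto
  from integral_continuous_on_param[OF this] show ?thesis
    by (simp add: airy_partial_def)
qed

lemma airy_primitive_first:
  fixes x t :: real assumes "t\<^sup>2 + x \<noteq> 0"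
  shows "((\<lambda>t. sin (t^3/3 + x*t) / (t\<^sup>2 + x)) has_real_derivative
      cos (t^3/3 + x*t) - sin (t^3/3 + x*t) * (2*t / (t\<^sup>2 + x)\<^sup>2)) (at t)"
  using assms by (auto intro!: derivative_eq_intros simp: divide_simps) (simp add: algebra_simps power2_eq_square)

lemma airy_primitive_second:
  fixes x t :: real assumes "t\<^sup>2 + x \<noteq> 0"
  shows "((\<lambda>t. - cos (t^3/3 + x*t) * (2*t / (t\<^sup>2 + x)^3)) has_real_derivative
      sin (t^3/3 + x*t) * (2*t / (t\<^sup>2 + x)\<^sup>2) - cos (t^3/3 + x*t) * (2 / (t\<^sup>2 + x)^3 - 12*t\<^sup>2 / (t\<^sup>2 + x)^4)) (at t)"
  using assms by (auto intro!: derivative_eq_intros simp: divide_simps) (simp add: algebra_simps power2_eq_square eval_nat_numeral)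

lemma has_integral_by_primitive:
  fixes f F :: "real \<Rightarrow> real"
  assumes "A \<le> B" "\<And>t. t \<in> {A..B} \<Longrightarrow> (F has_real_derivative f t) (at t)"
  shows "(f has_integral (F B - F A)) {A..B}"
  using assms
  by (intro fundamental_theorem_of_calculus)
     (auto simp: has_real_derivative_iff_has_vector_derivative[symmetric] has_field_derivative_at_within)

lemma abs_airy_integral_tail_le:
  fixes x A B :: real
  assumes A: "0 \<le> A" and AB: "A \<le> B" and posA: "0 < A\<^sup>2 + x"
  shows "\<bar>integral {A..B} (\<lambda>t. cos (t^3/3 + x*t))\<bar> \<le> 2 / (A\<^sup>2 + x)"
proof -
  define g where "g t = 2*t / (t\<^sup>2 + x)\<^sup>2" for t
  have pos: "0 < t\<^sup>2 + x" if "A \<le> t" for t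
    using posA power_mono[OF that A, of 2] by linarith
  have by_parts: "((\<lambda>t. cos (t^3/3 + x*t) - sin (t^3/3 + x*t) * g t) has_integral
      sin (B^3/3 + x*B) / (B\<^sup>2 + x) - sin (A^3/3 + x*A) / (A\<^sup>2 + x)) {A..B}"
    unfolding g_def using pos
    by (intro has_integral_by_primitive[OF AB, where F="\<lambda>t. sin (t^3/3 + x*t) / (t\<^sup>2 + x)", simplified]
        airy_primitive_first) (auto simp: less_imp_neq[symmetric])
  have "(g has_integral (- 1 / (B\<^sup>2 + x) - (- 1 / (A\<^sup>2 + x)))) {A..B}"
  proof (rule has_integral_by_primitive[OF AB])
    fix t assume "t \<in> {A..B}"
    with pos[of t] show "((\<lambda>t. - 1 / (t\<^sup>2 + x)) has_real_derivative g t) (at t)"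
      unfolding g_def by (auto intro!: derivative_eq_intros simp: power2_eq_square)
  qed
  then have g_integral: "(g has_integral (1 / (A\<^sup>2 + x) - 1 / (B\<^sup>2 + x))) {A..B}"
    by simp
  have sin_g_integrable: "(\<lambda>t. sin (t^3/3 + x*t) * g t) integrable_on {A..B}"
    unfolding g_def using pos
    by (intro integrable_continuous_interval continuous_intros) (auto simp: less_imp_neq[symmetric])
  have J: "\<bar>integral {A..B} (\<lambda>t. sin (t^3/3 + x*t) * g t)\<bar> \<le> integral {A..B} g"
    unfolding real_norm_def[symmetric]
  proof (rule integral_norm_bound_integral[OF sin_g_integrable has_integral_integrable[OF g_integral]])
    fix t assume "t \<in> {A..B}"
    then have "0 \<le> g t" using A by (simp add: g_def)
    then show "norm (sin (t^3/3 + x*t) * g t) \<le> g t"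
      by (simp add: abs_mult mult_left_le_one_le)
  qed
  have boundary: "\<bar>sin (t^3/3 + x*t) / (t\<^sup>2 + x)\<bar> \<le> 1 / (t\<^sup>2 + x)" if "A \<le> t" for t
    using pos[OF that] by (simp add: abs_divide divide_right_mono)
  have "integral {A..B} (\<lambda>t. cos (t^3/3 + x*t))
      = sin (B^3/3 + x*B) / (B\<^sup>2 + x) - sin (A^3/3 + x*A) / (A\<^sup>2 + x) + integral {A..B} (\<lambda>t. sin (t^3/3 + x*t) * g t)"
    using integral_unique[OF has_integral_add[OF by_parts integrable_integral[OF sin_g_integrable]]] by simp
  then show ?thesis
    using J boundary[of A] boundary[of B] integral_unique[OF g_integral] AB by linarith
qed

lemma airy_partial_convergent: "convergent (\<lambda>n::nat. airy_partial x (real n))"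
proof (rule Cauchy_convergent, rule CauchyI)
  fix e :: real assume e: "0 < e"
  obtain M :: nat where M: "max (2 / e - x) 1 < real M"
    using reals_Archimedean2 by blast
  have "real M \<le> (real M)\<^sup>2" using M by (simp add: power2_eq_square)
  moreover have "0 < 2 / e" using e by simp
  ultimately have M_large: "2 / e < (real M)\<^sup>2 + x" and M_pos: "0 < (real M)\<^sup>2 + x"
    using M by linarith+
  have close: "\<bar>airy_partial x (real n) - airy_partial x (real m)\<bar> < e" if "M \<le> m" "m \<le> n" for m n
  proof -
    have "(real M)\<^sup>2 \<le> (real m)\<^sup>2" using that by (simp add: power_mono)
    then have m_pos: "0 < (real m)\<^sup>2 + x" using M_pos by linarith
    have "2 / ((real m)\<^sup>2 + x) \<le> 2 / ((real M)\<^sup>2 + x)"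
      using \<open>(real M)\<^sup>2 \<le> (real m)\<^sup>2\<close> M_pos m_pos by (intro divide_left_mono) auto
    moreover have "2 / ((real M)\<^sup>2 + x) < e"
      using M_large M_pos e by (simp add: pos_divide_less_eq mult.commute divide_less_eq)
    moreover have "\<bar>integral {real m..real n} (\<lambda>t. cos (t^3/3 + x*t))\<bar> \<le> 2 / ((real m)\<^sup>2 + x)"
      using abs_airy_integral_tail_le[of "real m" "real n" x] m_pos that by simp
    moreover have "airy_partial x (real n) - airy_partial x (real m) = integral {real m..real n} (\<lambda>t. cos (t^3/3 + x*t))"
      using airy_partial_add[of "real m" "real n" x] that by simp
    ultimately show ?thesis by linarith
  qed
  show "\<exists>M. \<forall>m\<ge>M. \<forall>n\<ge>M. norm (airy_partial x (real m) - airy_partial x (real n)) < e"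
  proof (intro exI allI impI)
    fix m n assume "M \<le> m" "M \<le> n"
    then show "norm (airy_partial x (real m) - airy_partial x (real n)) < e"
      using close[of m n] close[of n m] by (cases "m \<le> n") (auto simp: abs_minus_commute)
  qed
qed

lemma airy_partial_tendsto_Ai: "(\<lambda>n::nat. airy_partial x (real n)) \<longlonglongrightarrow> pi * Ai x"
  using airy_partial_convergent[of x] by (simp add: Ai_def airy_partial_def convergent_LIMSEQ_iff)

lemma abs_Ai_le_if_eventually:
  assumes "\<And>n::nat. R \<le> real n \<Longrightarrow> \<bar>airy_partial x (real n)\<bar> \<le> B"
  shows "\<bar>pi * Ai x\<bar> \<le> B"
proof (rule LIMSEQ_le_const2[OF tendsto_rabs[OF airy_partial_tendsto_Ai]])
  obtain N :: nat where "R \<le> real N" using real_arch_simple by blast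
  then show "\<exists>N. \<forall>n\<ge>N. \<bar>airy_partial x (real n)\<bar> \<le> B"
    by (metis assms of_nat_mono order_trans)
qed

lemma abs_Ai_le_linear: "\<bar>Ai x\<bar> \<le> \<bar>x\<bar> + 3"
proof -
  define T where "T = \<bar>x\<bar> + 1"
  have "T * 1 \<le> T * T" by (rule mult_left_mono) (simp_all add: T_def)
  then have "T \<le> T\<^sup>2" by (simp add: power2_eq_square)
  then have T: "0 \<le> T" "1 \<le> T\<^sup>2 + x"
    by (auto simp: T_def)
  have "\<bar>pi * Ai x\<bar> \<le> \<bar>x\<bar> + 3"
  proof (rule abs_Ai_le_if_eventually)
    fix n :: nat assume n: "T \<le> real n"
    have "2 / (T\<^sup>2 + x) \<le> 2" using T by (simp add: divide_le_eq)
    moreover have "\<bar>integral {T..real n} (\<lambda>t. cos (t^3/3 + x*t))\<bar> \<le> 2 / (T\<^sup>2 + x)"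
      using abs_airy_integral_tail_le[OF T(1) n] T(2) by simp
    ultimately have "\<bar>airy_partial x (real n)\<bar> \<le> T + 2"
      using airy_partial_add[OF T(1) n, of x] abs_airy_partial_le[OF T(1), of x] by linarith
    then show "\<bar>airy_partial x (real n)\<bar> \<le> \<bar>x\<bar> + 3" by (simp add: T_def)
  qed
  moreover have "\<bar>Ai x\<bar> \<le> \<bar>pi * Ai x\<bar>"
    using pi_gt3 by (simp add: abs_mult mult_le_cancel_right1)
  ultimately show ?thesis by linarith
qed

lemma Ai_measurable[measurable]: "Ai \<in> borel_measurable borel"
proof -
  have "(\<lambda>x. pi * Ai x) \<in> borel_measurable borel"
    by (rule borel_measurable_LIMSEQ_real[where u="\<lambda>n x. airy_partial x (real n)"])
       (auto intro: airy_partial_tendsto_Ai borel_measurable_continuous_onI continuous_airy_partial)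
  then have "(\<lambda>x. (pi * Ai x) / pi) \<in> borel_measurable borel" by measurable
  then show ?thesis by simp
qed

lemma airy_partial_by_parts_twice:
  fixes x R :: real assumes x: "0 < x" and R: "0 \<le> R"
  shows "airy_partial x R = sin (R^3/3 + x*R) / (R\<^sup>2 + x) - cos (R^3/3 + x*R) * (2*R / (R\<^sup>2 + x)^3)
     + integral {0..R} (\<lambda>t. cos (t^3/3 + x*t) * (2 / (t\<^sup>2 + x)^3 - 12*t\<^sup>2 / (t\<^sup>2 + x)^4))"
proof -
  have nonzero: "t\<^sup>2 + x \<noteq> 0" for t
    using x by (metis add_nonneg_pos less_irrefl zero_le_power2)
  have first: "((\<lambda>t. cos (t^3/3 + x*t) - sin (t^3/3 + x*t) * (2*t / (t\<^sup>2 + x)\<^sup>2)) has_integral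
      sin (R^3/3 + x*R) / (R\<^sup>2 + x) - sin (0^3/3 + x*0) / (0\<^sup>2 + x)) {0..R}"
    by (rule has_integral_by_primitive[OF R]) (rule airy_primitive_first[OF nonzero])
  have second: "((\<lambda>t. sin (t^3/3 + x*t) * (2*t / (t\<^sup>2 + x)\<^sup>2)
        - cos (t^3/3 + x*t) * (2 / (t\<^sup>2 + x)^3 - 12*t\<^sup>2 / (t\<^sup>2 + x)^4))
      has_integral - cos (R^3/3 + x*R) * (2*R / (R\<^sup>2 + x)^3) - (- cos (0^3/3 + x*0) * (2*0 / (0\<^sup>2 + x)^3))) {0..R}"
    by (rule has_integral_by_primitive[OF R]) (rule airy_primitive_second[OF nonzero])
  have "(\<lambda>t. cos (t^3/3 + x*t) * (2 / (t\<^sup>2 + x)^3 - 12*t\<^sup>2 / (t\<^sup>2 + x)^4)) integrable_on {0..R}"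
    by (intro integrable_continuous_interval continuous_intros) (auto simp: nonzero)
  from has_integral_add[OF has_integral_add[OF first second] integrable_integral[OF this]]
  show ?thesis unfolding airy_partial_def by (intro integral_unique) simp
qed

lemma abs_airy_remainder_weight_le:
  fixes x t :: real assumes x: "1 \<le> x"
  shows "\<bar>2 / (t\<^sup>2 + x)^3 - 12*t\<^sup>2 / (t\<^sup>2 + x)^4\<bar> \<le> 14 / x\<^sup>2 * inverse (1 + t\<^sup>2)"
proof -
  define d where "d = t\<^sup>2 + x"
  have d1: "1 + t\<^sup>2 \<le> d" and dx: "x \<le> d" and t2: "t\<^sup>2 \<le> d" using x by (auto simp: d_def)
  have d_pos: "0 < d" using d1 by (smt (verit) zero_le_power2)
  have "12*t\<^sup>2 / d^4 \<le> 12*d / d^4" using t2 d_pos by (intro divide_right_mono) auto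
  also have "12*d / d^4 = 12 / d^3" using d_pos by (simp add: eval_nat_numeral field_simps)
  moreover have "0 \<le> 12*t\<^sup>2 / d^4" "0 \<le> 2 / d^3" "2 / d^3 + 12 / d^3 = 14 / d^3"
    using d_pos by (simp_all add: add_divide_distrib[symmetric])
  ultimately have "\<bar>2 / d^3 - 12*t\<^sup>2 / d^4\<bar> \<le> 14 / d^3"
    unfolding abs_le_iff by linarith
  also have "14 / d^3 \<le> 14 / ((1 + t\<^sup>2) * x\<^sup>2)"
  proof (rule divide_left_mono)
    have "x\<^sup>2 \<le> d\<^sup>2" using dx x by (intro power_mono) auto
    then have "(1 + t\<^sup>2) * x\<^sup>2 \<le> d * d\<^sup>2" using d1 d_pos by (intro mult_mono) auto
    then show "(1 + t\<^sup>2) * x\<^sup>2 \<le> d^3" by (simp add: eval_nat_numeral)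
    show "0 < d^3 * ((1 + t\<^sup>2) * x\<^sup>2)" using d_pos x by (intro mult_pos_pos) (auto simp: add_pos_nonneg)
  qed simp
  also have "\<dots> = 14 / x\<^sup>2 * inverse (1 + t\<^sup>2)" by (simp add: field_simps)
  finally show ?thesis by (simp add: d_def)
qed

lemma abs_airy_remainder_le:
  fixes x R :: real assumes x: "1 \<le> x" and R: "0 \<le> R"
  shows "\<bar>integral {0..R} (\<lambda>t. cos (t^3/3 + x*t) * (2 / (t\<^sup>2 + x)^3 - 12*t\<^sup>2 / (t\<^sup>2 + x)^4))\<bar> \<le> 7*pi / x\<^sup>2"
proof -
  have "0 < t\<^sup>2 + x" for t using x by (intro add_nonneg_pos) auto
  then have nonzero: "t\<^sup>2 + x \<noteq> 0" for t by (metis less_irrefl)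
  have "((\<lambda>t. inverse (1 + t\<^sup>2)) has_integral (arctan R - arctan 0)) {0..R}"
    by (rule has_integral_by_primitive[OF R]) (rule DERIV_arctan)
  then have arctan: "((\<lambda>t. 14 / x\<^sup>2 * inverse (1 + t\<^sup>2)) has_integral (14 / x\<^sup>2 * arctan R)) {0..R}"
    using has_integral_mult_right[of _ _ _ "14 / x\<^sup>2"] by simp
  have "norm (integral {0..R} (\<lambda>t. cos (t^3/3 + x*t) * (2 / (t\<^sup>2 + x)^3 - 12*t\<^sup>2 / (t\<^sup>2 + x)^4)))
      \<le> integral {0..R} (\<lambda>t. 14 / x\<^sup>2 * inverse (1 + t\<^sup>2))"
  proof (rule integral_norm_bound_integral)
    show "(\<lambda>t. cos (t^3/3 + x*t) * (2 / (t\<^sup>2 + x)^3 - 12*t\<^sup>2 / (t\<^sup>2 + x)^4)) integrable_on {0..R}"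
      by (intro integrable_continuous_interval continuous_intros) (auto simp: nonzero)
    show "(\<lambda>t. 14 / x\<^sup>2 * inverse (1 + t\<^sup>2)) integrable_on {0..R}" using arctan by blast
    fix t
    have "\<bar>cos (t^3/3 + x*t)\<bar> * \<bar>2 / (t\<^sup>2 + x)^3 - 12*t\<^sup>2 / (t\<^sup>2 + x)^4\<bar>
        \<le> 1 * (14 / x\<^sup>2 * inverse (1 + t\<^sup>2))"
      using abs_airy_remainder_weight_le[OF x] by (intro mult_mono) auto
    then show "norm (cos (t^3/3 + x*t) * (2 / (t\<^sup>2 + x)^3 - 12*t\<^sup>2 / (t\<^sup>2 + x)^4))
        \<le> 14 / x\<^sup>2 * inverse (1 + t\<^sup>2)"
      by (simp add: abs_mult)
  qed
  also have "\<dots> = 14 / x\<^sup>2 * arctan R" using arctan by (rule integral_unique)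
  also have "\<dots> \<le> 14 / x\<^sup>2 * (pi / 2)" using arctan_ubound[of R] by (intro mult_left_mono) auto
  finally show ?thesis by simp
qed

lemma abs_Ai_le_inverse_square:
  fixes x :: real assumes x: "1 \<le> x"
  shows "\<bar>Ai x\<bar> \<le> 8 / x\<^sup>2"
proof -
  have "\<bar>pi * Ai x\<bar> \<le> 1 / x\<^sup>2 + 2 / x\<^sup>2 + 7*pi / x\<^sup>2"
  proof (rule abs_Ai_le_if_eventually)
    fix n :: nat
    define R where "R = real n"
    assume "x \<le> real n"
    then have R: "x \<le> R" "1 \<le> R" "0 \<le> R" using x by (auto simp: R_def)
    have pos: "0 < R\<^sup>2 + x" using x by (simp add: add_nonneg_pos)
    have x2: "x\<^sup>2 \<le> R\<^sup>2" using R x by (intro power_mono) auto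
    have "\<bar>sin (R^3/3 + x*R) / (R\<^sup>2 + x)\<bar> \<le> 1 / (R\<^sup>2 + x)"
      using pos by (simp add: abs_divide divide_right_mono)
    also have "\<dots> \<le> 1 / x\<^sup>2"
      using x2 x pos by (intro divide_left_mono) auto
    finally have first: "\<bar>sin (R^3/3 + x*R) / (R\<^sup>2 + x)\<bar> \<le> 1 / x\<^sup>2" .
    have "R * x\<^sup>2 \<le> R * R^5"
      using x2 R power_increasing[of 2 5 R] by (intro mult_left_mono) auto
    also have "\<dots> = (R\<^sup>2)^3" by (simp add: eval_nat_numeral)
    also have "\<dots> \<le> (R\<^sup>2 + x)^3" using x by (intro power_mono) auto
    finally have denominator: "R * x\<^sup>2 \<le> (R\<^sup>2 + x)^3" .
    have weight: "0 \<le> 2*R / (R\<^sup>2 + x)^3" using R pos by simp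
    have "\<bar>cos (R^3/3 + x*R) * (2*R / (R\<^sup>2 + x)^3)\<bar> \<le> 1 * (2*R / (R\<^sup>2 + x)^3)"
      unfolding abs_mult abs_of_nonneg[OF weight] by (rule mult_right_mono[OF abs_cos_le_one weight])
    also have "\<dots> \<le> 2*R / (R * x\<^sup>2)"
      unfolding mult_1_left using R x denominator pos by (intro divide_left_mono) (auto intro!: mult_pos_pos)
    also have "\<dots> = 2 / x\<^sup>2" using R by simp
    finally have second: "\<bar>cos (R^3/3 + x*R) * (2*R / (R\<^sup>2 + x)^3)\<bar> \<le> 2 / x\<^sup>2" .
    have "0 < x" using x by simp
    from airy_partial_by_parts_twice[OF this R(3)] abs_airy_remainder_le[OF x R(3)] first second
    have "\<bar>airy_partial x R\<bar> \<le> 1 / x\<^sup>2 + 2 / x\<^sup>2 + 7*pi / x\<^sup>2"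
      unfolding abs_le_iff by linarith
    then show "\<bar>airy_partial x (real n)\<bar> \<le> 1 / x\<^sup>2 + 2 / x\<^sup>2 + 7*pi / x\<^sup>2" by (simp add: R_def)
  qed
  also have "\<dots> = (3 + 7*pi) / x\<^sup>2" by (simp add: add_divide_distrib)
  also have "\<dots> \<le> pi * 8 / x\<^sup>2" using pi_gt3 by (intro divide_right_mono) auto
  finally have "pi * \<bar>Ai x\<bar> \<le> pi * (8 / x\<^sup>2)" by (simp add: abs_mult)
  then show ?thesis by (rule mult_le_cancel_left_pos[OF pi_gt_zero, THEN iffD1])
qed

lemma abs_Ai_le_nonneg:
  fixes u :: real assumes u: "0 \<le> u"
  shows "\<bar>Ai u\<bar> \<le> 32 / (1 + u)\<^sup>2"
proof (cases "1 \<le> u")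
  case True
  have "(1 + u)\<^sup>2 \<le> (2*u)\<^sup>2" using True by (intro power_mono) auto
  then have "8 / u\<^sup>2 \<le> 32 / (1 + u)\<^sup>2"
    using True by (simp add: divide_simps power_mult_distrib)
  then show ?thesis using abs_Ai_le_inverse_square[OF True] by linarith
next
  case False
  have "(1 + u)\<^sup>2 \<le> 2\<^sup>2" using False u by (intro power_mono) auto
  then have "32 / 4 \<le> 32 / (1 + u)\<^sup>2" using u by (intro divide_left_mono) (auto simp: add_pos_nonneg)
  then show ?thesis using abs_Ai_le_linear[of u] False u by simp
qed

text \<open>The weight separates the variables in the bound for \<open>Ai (x + t)\<close>, \<open>x \<ge> 0\<close>; its growth as
  \<open>t \<rightarrow> -\<infinity>\<close> is absorbed by the exponential decay of \<open>\<sigma>\<close>.\<close>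

definition airy_weight :: "real \<Rightarrow> real" where
  "airy_weight t = (if 0 \<le> t then 1 / (1 + t) else (1 - t)\<^sup>2)"

lemma abs_Ai_add_le:
  fixes x t :: real assumes x: "0 \<le> x"
  shows "\<bar>Ai (x + t)\<bar> \<le> 32 * airy_weight t / (1 + x)"
proof -
  consider "0 \<le> t" | "t < 0" "0 \<le> x + t" | "x + t < 0" by linarith
  then show ?thesis
  proof cases
    case 1
    have "(1 + x) * (1 + t) \<le> (1 + (x + t))\<^sup>2"
      unfolding power2_eq_square using x 1 by (intro mult_mono) auto
    then have "32 / (1 + (x + t))\<^sup>2 \<le> 32 / ((1 + x) * (1 + t))"
      using x 1 by (intro divide_left_mono) (auto simp: add_pos_nonneg)
    then show ?thesis using abs_Ai_le_nonneg[of "x + t"] x 1 by (simp add: airy_weight_def mult.commute)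
  next
    case 2
    define u where "u = x + t"
    have u: "0 \<le> u" using 2 by (simp add: u_def)
    have "1 + x \<le> (1 + u) * (1 - t)"
      using mult_nonneg_nonneg[OF u, of "-t"] 2 by (simp add: u_def algebra_simps)
    then have "32 / (1 + u) \<le> 32 * (1 - t) / (1 + x)"
      using 2 u x by (simp add: divide_simps algebra_simps)
    moreover have "32 / (1 + u)\<^sup>2 \<le> 32 / (1 + u)"
      using u by (intro divide_left_mono) (auto simp: power2_eq_square)
    moreover have "1 - t \<le> (1 - t)\<^sup>2" using 2 by (simp add: power2_eq_square)
    then have "32 * (1 - t) / (1 + x) \<le> 32 * (1 - t)\<^sup>2 / (1 + x)"
      using x by (intro divide_right_mono) auto
    ultimately show ?thesis
      using abs_Ai_le_nonneg[OF u] 2 by (simp add: airy_weight_def u_def)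
  next
    case 3
    have "(1 - t) * (1 + x) \<le> (1 - t)\<^sup>2"
      using mult_left_mono[of "1 + x" "1 - t" "1 - t"] 3 x by (simp add: power2_eq_square)
    then have "1 - t \<le> (1 - t)\<^sup>2 / (1 + x)" using x by (simp add: le_divide_eq)
    moreover have "0 \<le> (1 - t)\<^sup>2 / (1 + x)" using x by simp
    ultimately have "\<bar>x + t\<bar> + 3 \<le> 32 * ((1 - t)\<^sup>2 / (1 + x))" using 3 x by linarith
    then show ?thesis
      using abs_Ai_le_linear[of "x + t"] 3 x by (simp add: airy_weight_def)
  qed
qed

section \<open>The factorisation of the kernel\<close>

lemma admissible_sigma_measurable:
  assumes "admissible_sigma \<sigma>"
  shows "\<sigma> \<in> borel_measurable borel"
proof -
  obtain S D where S: "finite S" "D 0 = \<sigma>"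
      and D: "\<And>k x. x \<notin> S \<Longrightarrow> (D k has_vector_derivative D (Suc k) x) (at x)"
    using assms unfolding admissible_sigma_def smooth_off_def by blast
  have "continuous_on (- S) \<sigma>"
    using D[of _ 0] S(2) by (auto intro!: continuous_at_imp_continuous_on has_vector_derivative_continuous)
  then show ?thesis
    using S(1) by (intro borel_measurable_continuous_countable_exceptions[of S]) (auto intro: countable_finite)
qed

lemma admissible_sigma_bounds:
  assumes "admissible_sigma \<sigma>"
  obtains C c where "0 < c" "0 \<le> C" "\<And>t. norm (\<sigma> t) \<le> 1 + C"
    "\<And>t. t \<le> 0 \<Longrightarrow> norm (\<sigma> t) \<le> C * exp (c * t)"
proof -
  obtain C c where c: "0 < c" and left: "\<And>t. t \<le> 0 \<Longrightarrow> norm (\<sigma> t) \<le> C * exp (c * t)"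
      and right: "\<And>t. 0 \<le> t \<Longrightarrow> norm (\<sigma> t - 1) \<le> C * exp (- c * t)"
    using assms unfolding admissible_sigma_def by blast
  have "0 \<le> C * exp (c * 0)" using left[of 0] norm_ge_zero order_trans by blast
  then have C: "0 \<le> C" by simp
  have bounded: "norm (\<sigma> t) \<le> 1 + C" for t
  proof (cases "t \<le> 0")
    case True
    have "C * exp (c * t) \<le> C * 1"
      using True c C by (intro mult_left_mono) (auto simp: mult_nonneg_nonpos)
    then show ?thesis using left[OF True] by linarith
  next
    case False
    have "C * exp (- c * t) \<le> C * 1"
      using False c C by (intro mult_left_mono) auto
    then have "norm (\<sigma> t - 1) \<le> C" using right[of t] False by linarith
    then show ?thesis using norm_triangle_ineq[of "\<sigma> t - 1" 1] by simp
  qed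
  show ?thesis using c C bounded left by (rule that)
qed

lemma admissible_sigma_shift_bounds:
  assumes "admissible_sigma \<sigma>"
  obtains E c where "0 < c" "\<And>t. norm (\<sigma> (t - s)) \<le> E" "\<And>t. norm (\<sigma> (t - s)) \<le> E * exp (c * t)"
proof -
  obtain C c where c: "0 < c" and C: "0 \<le> C" and bounded: "\<And>t. norm (\<sigma> t) \<le> 1 + C"
      and left: "\<And>t. t \<le> 0 \<Longrightarrow> norm (\<sigma> t) \<le> C * exp (c * t)"
    using admissible_sigma_bounds[OF assms] by blast
  define E where "E = (1 + C) * exp (c * \<bar>s\<bar>)"
  have E: "1 + C \<le> E * exp (c * t)" if "-\<bar>s\<bar> \<le> t" for t
  proof -
    have "0 \<le> c * \<bar>s\<bar> + c * t" using that c by (simp add: distrib_left[symmetric])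
    then have "1 * (1 + C) \<le> exp (c * \<bar>s\<bar> + c * t) * (1 + C)"
      using C by (intro mult_right_mono) auto
    then show ?thesis by (simp add: E_def exp_add mult_ac)
  qed
  show ?thesis
  proof (rule that[OF c])
    show "norm (\<sigma> (t - s)) \<le> E" for t
      using bounded[of "t - s"] E[of 0] by simp
    show "norm (\<sigma> (t - s)) \<le> E * exp (c * t)" for t
    proof (cases "t - s \<le> 0")
      case True
      have "c * (- s) \<le> c * \<bar>s\<bar>" using c by (intro mult_left_mono) auto
      then have "exp (c * (t - s)) \<le> exp (c * \<bar>s\<bar> + c * t)" by (simp add: algebra_simps)
      then have "C * exp (c * (t - s)) \<le> (1 + C) * exp (c * \<bar>s\<bar> + c * t)"
        using C by (intro mult_mono) auto
      then show ?thesis using left[OF True] by (simp add: E_def exp_add mult_ac)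
    next
      case False
      then show ?thesis using bounded[of "t - s"] E[of t] by linarith
    qed
  qed
qed

lemma power_six_le_exp:
  fixes c y :: real assumes c: "0 < c" and y: "0 \<le> y"
  shows "min 1 (c/6) ^ 6 * (1 + y) ^ 6 \<le> exp (c * y)"
proof -
  have "min 1 (c/6) * y \<le> c / 6 * y" using y by (intro mult_right_mono) auto
  moreover have "min 1 (c/6) * (1 + y) = min 1 (c/6) + min 1 (c/6) * y" by (simp add: distrib_left)
  moreover have "min 1 (c/6) \<le> 1" by simp
  ultimately have "min 1 (c/6) * (1 + y) \<le> 1 + c * y / 6" by simp
  also have "\<dots> \<le> exp (c * y / 6)" by (rule exp_ge_add_one_self)
  finally have "(min 1 (c/6) * (1 + y))^6 \<le> (exp (c * y / 6))^6"
    using c y by (intro power_mono) auto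
  also have "(exp (c * y / 6))^6 = exp (c * y)" by (simp add: exp_of_nat_mult[symmetric])
  finally show ?thesis by (simp add: power_mult_distrib)
qed

lemma integrable_inverse_1_plus_square_lborel: "integrable lborel (\<lambda>x::real. inverse (1 + x\<^sup>2))"
  using integrable_inverse_1_plus_square by (simp add: set_integrable_def einterval_def)

lemma airy_weight_square_le_nonneg:
  fixes t :: real assumes "0 \<le> t"
  shows "(airy_weight t)\<^sup>2 \<le> inverse (1 + t\<^sup>2)"
proof -
  have "1 + t\<^sup>2 \<le> (1 + t)\<^sup>2" using assms by (simp add: power2_eq_square algebra_simps)
  then have "inverse ((1 + t)\<^sup>2) \<le> inverse (1 + t\<^sup>2)"
    by (intro le_imp_inverse_le) (auto simp: add_pos_nonneg)
  then show ?thesis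
    using assms by (simp add: airy_weight_def power_one_over inverse_eq_divide)
qed

lemma airy_weight_square_le_neg:
  fixes c t :: real assumes c: "0 < c" and t: "t < 0"
  shows "(airy_weight t)\<^sup>2 \<le> exp (- (c * t)) / min 1 (c/6) ^ 6 * inverse (1 + t\<^sup>2)"
proof -
  define m where "m = min 1 (c/6)"
  have m: "0 < m^6" using c by (simp add: m_def)
  have "1 + t\<^sup>2 \<le> (1 - t)\<^sup>2" using t by (simp add: power2_eq_square algebra_simps)
  then have "(1 - t)^4 * (1 + t\<^sup>2) \<le> (1 - t)^4 * (1 - t)\<^sup>2"
    by (intro mult_left_mono) auto
  also have "\<dots> = (1 - t)^6" by (simp add: power_add[symmetric])
  also have "\<dots> \<le> exp (- (c * t)) / m^6"
  proof -
    have "m^6 * (1 + - t)^6 \<le> exp (c * - t)"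
      unfolding m_def using t by (intro power_six_le_exp[OF c]) simp
    then show ?thesis by (simp only: pos_le_divide_eq[OF m] mult.commute[of _ "m^6"]) simp
  qed
  finally have "(1 - t)^4 \<le> exp (- (c * t)) / m^6 / (1 + t\<^sup>2)"
    by (simp only: pos_le_divide_eq[OF add_pos_nonneg[OF zero_less_one zero_le_power2]])
  moreover have "(airy_weight t)\<^sup>2 = (1 - t)^4"
    using t by (simp add: airy_weight_def flip: power_mult)
  ultimately show ?thesis
    by (metis divide_inverse m_def)
qed

lemma integrable_times_airy_weight_square:
  fixes f :: "real \<Rightarrow> real"
  assumes [measurable]: "f \<in> borel_measurable borel" and c: "0 < c"
    and f: "\<And>t. 0 \<le> f t" "\<And>t. f t \<le> E" "\<And>t. f t \<le> E * exp (c * t)"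
  shows "integrable lborel (\<lambda>t. f t * (airy_weight t)\<^sup>2)"
proof (rule Bochner_Integration.integrable_bound)
  define m where "m = min 1 (c/6)"
  have m: "0 < m" using c by (simp add: m_def)
  have E: "0 \<le> E" using f(1,2) order_trans by blast
  show "integrable lborel (\<lambda>t. (E + E / m^6) * inverse (1 + t\<^sup>2))"
    using integrable_inverse_1_plus_square_lborel by simp
  show "(\<lambda>t. f t * (airy_weight t)\<^sup>2) \<in> borel_measurable lborel"
    unfolding airy_weight_def by measurable
  show "AE t in lborel. norm (f t * (airy_weight t)\<^sup>2) \<le> norm ((E + E / m^6) * inverse (1 + t\<^sup>2))"
  proof (rule AE_I2)
    fix t :: real
    have "f t * (airy_weight t)\<^sup>2 \<le> (E + E / m^6) * inverse (1 + t\<^sup>2)"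
    proof (cases "0 \<le> t")
      case True
      have "f t * (airy_weight t)\<^sup>2 \<le> E * inverse (1 + t\<^sup>2)"
        using f E airy_weight_square_le_nonneg[OF True] by (intro mult_mono) auto
      also have "\<dots> \<le> (E + E / m^6) * inverse (1 + t\<^sup>2)"
        using E m by (intro mult_right_mono) auto
      finally show ?thesis .
    next
      case False
      have "f t * (airy_weight t)\<^sup>2 \<le> E * exp (c * t) * (exp (- (c * t)) / m^6 * inverse (1 + t\<^sup>2))"
        using f(1,3) E airy_weight_square_le_neg[OF c, of t] False by (intro mult_mono) (auto simp: m_def)
      also have "\<dots> = E / m^6 * inverse (1 + t\<^sup>2)"
        by (simp add: exp_minus divide_inverse)
      also have "\<dots> \<le> (E + E / m^6) * inverse (1 + t\<^sup>2)"
        using E by (intro mult_right_mono) auto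
      finally show ?thesis .
    qed
    then show "norm (f t * (airy_weight t)\<^sup>2) \<le> norm ((E + E / m^6) * inverse (1 + t\<^sup>2))"
      using f(1) by simp
  qed
qed

lemma square_integrable_inverse_distance:
  "integrable (restrict_space lborel {s<..}) (\<lambda>x::real. (1 / (1 + \<bar>x - s\<bar>))\<^sup>2)"
proof -
  have "integrable lborel (\<lambda>x. (1 / (1 + \<bar>x - s\<bar>))\<^sup>2)"
  proof (rule Bochner_Integration.integrable_bound)
    show "integrable lborel (\<lambda>x. inverse (1 + (- s + 1 * x)\<^sup>2))"
      using lborel_integrable_real_affine[OF integrable_inverse_1_plus_square_lborel, of 1 "- s"] by simp
    show "AE x in lborel. norm ((1 / (1 + \<bar>x - s\<bar>))\<^sup>2) \<le> norm (inverse (1 + (- s + 1 * x)\<^sup>2))"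
    proof (rule AE_I2)
      fix x :: real
      have "1 + (x - s)\<^sup>2 \<le> (1 + \<bar>x - s\<bar>)\<^sup>2" by (simp add: power2_eq_square algebra_simps)
      then have "1 / (1 + \<bar>x - s\<bar>)\<^sup>2 \<le> 1 / (1 + (x - s)\<^sup>2)"
        by (intro divide_left_mono) (auto simp: add_pos_nonneg)
      then show "norm ((1 / (1 + \<bar>x - s\<bar>))\<^sup>2) \<le> norm (inverse (1 + (- s + 1 * x)\<^sup>2))"
        by (simp add: power_divide divide_inverse power_inverse)
    qed
  qed measurable
  then have "integrable lborel (\<lambda>x. indicator {s<..} x *\<^sub>R (1 / (1 + \<bar>x - s\<bar>))\<^sup>2)"
    by (intro integrable_mult_indicator) auto
  then show ?thesis by (subst integrable_restrict_space) auto
qed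

lemma restrict_space_lborel_UNIV: "restrict_space lborel UNIV = (lborel :: real measure)"
  by (rule measure_eqI) (auto simp: emeasure_restrict_space)

lemma measurable_restrict_space_pair:
  assumes "(\<lambda>z. f (fst z) (snd z)) \<in> borel_measurable (lborel \<Otimes>\<^sub>M lborel)"
  shows "(\<lambda>z. f (fst z) (snd z)) \<in> borel_measurable (restrict_space lborel A \<Otimes>\<^sub>M restrict_space lborel (B :: real set))"
proof -
  have "(\<lambda>z. (fst z, snd z)) \<in> measurable (restrict_space lborel A \<Otimes>\<^sub>M restrict_space lborel B) (lborel \<Otimes>\<^sub>M lborel)"
    by (intro measurable_Pair measurable_compose[OF measurable_fst] measurable_compose[OF measurable_snd]
        measurable_restrict_space1 measurable_ident_sets[OF refl])
  from measurable_compose[OF this assms] show ?thesis by simp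
qed

lemma airy_square_integrable_factorization:
  fixes \<sigma> g h :: "real \<Rightarrow> complex"
  assumes \<sigma>: "admissible_sigma \<sigma>"
    and [measurable]: "g \<in> borel_measurable borel" "h \<in> borel_measurable borel"
    and norm_g: "\<And>y. norm (g y) = sqrt (norm (\<sigma> y))" and norm_h: "\<And>y. norm (h y) = sqrt (norm (\<sigma> y))"
  shows "square_integrable_factorization (restrict_space lborel {s<..}) (restrict_space lborel UNIV)
    (\<lambda>x t. h (t - s) * Ai (x + t - s)) (\<lambda>x t. g (t - s) * Ai (x + t - s))
    (\<lambda>x. 1 / (1 + \<bar>x - s\<bar>)) (\<lambda>t. 32 * sqrt (norm (\<sigma> (t - s))) * airy_weight t)"
proof (rule square_integrable_factorization.intro)
  note [measurable] = admissible_sigma_measurable[OF \<sigma>]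
  show "sigma_finite_measure (restrict_space lborel {s<..})" "sigma_finite_measure (restrict_space lborel UNIV)"
    by (auto intro: sigma_finite_measure_restrict_space lborel.sigma_finite_measure_axioms)
  show "(\<lambda>z. h (snd z - s) * Ai (fst z + snd z - s)) \<in> borel_measurable (restrict_space lborel {s<..} \<Otimes>\<^sub>M restrict_space lborel UNIV)"
    "(\<lambda>z. g (snd z - s) * Ai (fst z + snd z - s)) \<in> borel_measurable (restrict_space lborel {s<..} \<Otimes>\<^sub>M restrict_space lborel UNIV)"
    by (intro measurable_restrict_space_pair[where f="\<lambda>x t. h (t - s) * Ai (x + t - s)"]
        measurable_restrict_space_pair[where f="\<lambda>x t. g (t - s) * Ai (x + t - s)"]; measurable)+
  show "integrable (restrict_space lborel {s<..}) (\<lambda>x. (1 / (1 + \<bar>x - s\<bar>))\<^sup>2)"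
    by (rule square_integrable_inverse_distance)
  obtain E c where c: "0 < c" and E: "\<And>t. norm (\<sigma> (t - s)) \<le> E" "\<And>t. norm (\<sigma> (t - s)) \<le> E * exp (c * t)"
    using admissible_sigma_shift_bounds[OF \<sigma>] by blast
  have "(\<lambda>t. norm (\<sigma> (t - s))) \<in> borel_measurable borel" by measurable
  then have "integrable lborel (\<lambda>t. norm (\<sigma> (t - s)) * (airy_weight t)\<^sup>2)"
    by (rule integrable_times_airy_weight_square[OF _ c _ E]) simp
  then have "integrable lborel (\<lambda>t. 1024 * (norm (\<sigma> (t - s)) * (airy_weight t)\<^sup>2))"
    by (rule integrable_mult_right)
  moreover have "(32 * sqrt (norm (\<sigma> (t - s))) * airy_weight t)\<^sup>2 = 1024 * (norm (\<sigma> (t - s)) * (airy_weight t)\<^sup>2)" for t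
    by (simp add: power_mult_distrib)
  ultimately show "integrable (restrict_space lborel UNIV) (\<lambda>t. (32 * sqrt (norm (\<sigma> (t - s))) * airy_weight t)\<^sup>2)"
    by (simp add: restrict_space_lborel_UNIV)
  have Ai: "\<bar>Ai (x + t - s)\<bar> \<le> 1 / (1 + \<bar>x - s\<bar>) * (32 * airy_weight t)" if "x \<in> space (restrict_space lborel {s<..})" for x t
  proof -
    have "s < x" using that by simp
    then show ?thesis using abs_Ai_add_le[of "x - s" t] by (simp add: add_diff_eq add.commute)
  qed
  show "norm (h (t - s) * Ai (x + t - s)) \<le> 1 / (1 + \<bar>x - s\<bar>) * (32 * sqrt (norm (\<sigma> (t - s))) * airy_weight t)"
    "norm (g (t - s) * Ai (x + t - s)) \<le> 1 / (1 + \<bar>x - s\<bar>) * (32 * sqrt (norm (\<sigma> (t - s))) * airy_weight t)"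
    if "x \<in> space (restrict_space lborel {s<..})" for x t
    using mult_left_mono[OF Ai[OF that] real_sqrt_ge_zero[OF norm_ge_zero], of "\<sigma> (t - s)"]
    by (simp_all add: norm_mult norm_g norm_h ac_simps)
qed

lemma lborel_integral_shift:
  fixes f :: "real \<Rightarrow> 'a::{banach, second_countable_topology}"
  shows "(\<integral>t. f t \<partial>lborel) = (\<integral>t. f (t - s) \<partial>lborel)"
  using lborel_integral_real_affine[of 1 f "- s"] by simp

lemma airy_kernel_eq_shifted_integral:
  "(\<integral>x. Ai (x + t - s) * Ai (x + t' - s) \<partial>restrict_space lborel {s<..}) = airy_kernel t t'"
proof -
  define F where "F w = Ai (t + w) * Ai (t' + w)" for w
  have [measurable]: "F \<in> borel_measurable borel" unfolding F_def by measurable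
  have "(\<integral>x. Ai (x + t - s) * Ai (x + t' - s) \<partial>restrict_space lborel {s<..})
      = (\<integral>x. indicator {s<..} x *\<^sub>R F (x - s) \<partial>lborel)"
    by (subst integral_restrict_space) (auto simp: F_def algebra_simps)
  also have "\<dots> = (\<integral>w. indicator {s<..} (w + s) *\<^sub>R F w \<partial>lborel)"
    using lborel_integral_shift[of "\<lambda>x. indicator {s<..} x *\<^sub>R F (x - s)" "- s"] by simp
  also have "\<dots> = (\<integral>w. indicator {0..} w *\<^sub>R F w \<partial>lborel)"
    using AE_lborel_singleton[of 0]
    by (intro integral_cong_AE) (auto elim!: eventually_mono split: split_indicator)
  also have "\<dots> = airy_kernel t t'"
    unfolding airy_kernel_def by (subst integral_restrict_space) (auto simp: F_def)
  finally show ?thesis .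
qed

lemma shifted_product_integral_eq_sigma_kernel:
  fixes g h \<sigma> :: "real \<Rightarrow> complex"
  assumes factors: "\<And>y. g y * h y = \<sigma> y"
  shows "(\<integral>t. h (t - s) * Ai (x + t - s) * (g (t - s) * Ai (y + t - s)) \<partial>lborel)
       = (LINT t | lborel. \<sigma> t * complex_of_real (Ai (x + t) * Ai (y + t)))"
proof -
  have "(LINT t | lborel. \<sigma> t * complex_of_real (Ai (x + t) * Ai (y + t)))
      = (LINT t | lborel. \<sigma> (t - s) * complex_of_real (Ai (x + (t - s)) * Ai (y + (t - s))))"
    by (rule lborel_integral_shift)
  also have "\<dots> = (\<integral>t. h (t - s) * Ai (x + t - s) * (g (t - s) * Ai (y + t - s)) \<partial>lborel)"
    by (simp add: factors[symmetric] ac_simps add_diff_eq)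
  finally show ?thesis ..
qed

lemma shifted_product_integral_eq_airy_kernel:
  fixes g h :: "real \<Rightarrow> complex"
  shows "(\<integral>x. g (x' - s) * Ai (x + x' - s) * (h (y' - s) * Ai (x + y' - s)) \<partial>restrict_space lborel {s<..})
       = g (x' - s) * complex_of_real (airy_kernel x' y') * h (y' - s)"
proof -
  have "(\<integral>x. g (x' - s) * Ai (x + x' - s) * (h (y' - s) * Ai (x + y' - s)) \<partial>restrict_space lborel {s<..})
      = (\<integral>x. (g (x' - s) * h (y' - s)) * complex_of_real (Ai (x + x' - s) * Ai (x + y' - s)) \<partial>restrict_space lborel {s<..})"
    by (simp add: ac_simps)
  also have "\<dots> = g (x' - s) * h (y' - s) * complex_of_real (airy_kernel x' y')"
    by (simp only: integral_mult_right_zero integral_complex_of_real airy_kernel_eq_shifted_integral)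
  finally show ?thesis by (simp add: ac_simps)
qed

theorem proposition36:
  fixes \<sigma> r :: "real \<Rightarrow> complex" and s :: real
  assumes "admissible_sigma \<sigma>"
    and "\<And>t. (r t)\<^sup>2 = \<sigma> t"
  shows "fredholm_det {s<..}
           (\<lambda>x y. LINT t | lborel. \<sigma> t * complex_of_real (Ai (x + t) * Ai (y + t)))
       = fredholm_det UNIV
           (\<lambda>x y. r (x - s) * complex_of_real (airy_kernel x y) * r (y - s))"
proof -
  \<comment> \<open>\<open>r\<close> need not be measurable, so the factorisation uses the measurable square root \<open>g\<close>;
      the determinant only sees the products \<open>g h = \<sigma> = r\<^sup>2\<close>.\<close>
  define g where "g y = complex_of_real (sqrt (norm (\<sigma> y)))" for y
  define h where "h y = \<sigma> y / g y" for y
  have factors: "g y * h y = \<sigma> y" for y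
    by (cases "\<sigma> y = 0") (auto simp: g_def h_def)
  note [measurable] = admissible_sigma_measurable[OF assms(1)]
  have "square_integrable_factorization (restrict_space lborel {s<..}) (restrict_space lborel UNIV)
      (\<lambda>x t. h (t - s) * Ai (x + t - s)) (\<lambda>x t. g (t - s) * Ai (x + t - s))
      (\<lambda>x. 1 / (1 + \<bar>x - s\<bar>)) (\<lambda>t. 32 * sqrt (norm (\<sigma> (t - s))) * airy_weight t)"
    by (rule airy_square_integrable_factorization[OF assms(1)])
       (auto simp: g_def h_def norm_divide real_div_sqrt)
  note swap = fredholm_det_swap[OF this, unfolded restrict_space_lborel_UNIV]
  have AB: "(\<lambda>x y. \<integral>t. h (t - s) * Ai (x + t - s) * (g (t - s) * Ai (y + t - s)) \<partial>lborel)
      = (\<lambda>x y. LINT t | lborel. \<sigma> t * complex_of_real (Ai (x + t) * Ai (y + t)))"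
    by (intro ext shifted_product_integral_eq_sigma_kernel factors)
  have BA: "(\<lambda>x' y'. \<integral>x. g (x' - s) * Ai (x + x' - s) * (h (y' - s) * Ai (x + y' - s)) \<partial>restrict_space lborel {s<..})
      = (\<lambda>x y. g (x - s) * complex_of_real (airy_kernel x y) * h (y - s))"
    by (intro ext shifted_product_integral_eq_airy_kernel)
  have "fredholm_det {s<..} (\<lambda>x y. LINT t | lborel. \<sigma> t * complex_of_real (Ai (x + t) * Ai (y + t)))
      = fredholm_det UNIV (\<lambda>x y. g (x - s) * complex_of_real (airy_kernel x y) * h (y - s))"
    using swap unfolding AB BA .
  also have "\<dots> = fredholm_det UNIV (\<lambda>x y. r (x - s) * complex_of_real (airy_kernel x y) * r (y - s))"
    by (rule fredholm_det_conjugate_cong) (simp add: factors assms(2)[symmetric] power2_eq_square)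
  finally show ?thesis .
qed

end
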